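(* Let $|q|\ne1$, $q\ne0$, $x\in\mathbb C^*$ with none of $x^{\pm1},x^{\pm2}$ an integer power of $q$, and $m\in\mathbb Z$. With $LA_m=A_{m+1}C_m-A_mC_{m+1}$ and $LB_m=B_{m+1}C_m-B_mC_{m+1}$ (all at $(x,q)$), $$C_m(x,q)=\frac1{x^{-1}-x}\big(A_m(x,q)LB_m(x,q)-B_m(x,q)LA_m(x,q)\big),$$ $$C_{m+1}(x,q)=\frac1{x^{-1}-x}\big(A_{m+1}(x,q)LB_m(x,q)-B_{m+1}(x,q)LA_m(x,q)\big).$$
   Context: Notation: $(a;q)_k=\prod_{j=0}^{k-1}(1-aq^j)$. For $|q|\ne1$: $C_m(x,q)=\sum_{k\ge0}(-1)^k\frac{q^{k(k+1)/2+km}}{(x^{-1};q)_{k+1}(x;q)_{k+1}}$, $A_m(x,q)=\sum_{k\ge0}(-1)^k\frac{q^{k(k+1)/2+km}x^{k+m}}{(q;q)_k(x^2q;q)_k}$, $B_m(x,q)=A_m(x^{-1},q)$. *)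

theory Defs
  imports Complex_Main
begin

definition qpoch :: "complex \<Rightarrow> complex \<Rightarrow> nat \<Rightarrow> complex" where
  "qpoch a q k = (\<Prod>j<k. 1 - a * q ^ j)"

definition Cser :: "int \<Rightarrow> complex \<Rightarrow> complex \<Rightarrow> complex" where
  "Cser m x q = (\<Sum>k. (-1) ^ k * q powi (int k * (int k + 1) div 2 + int k * m)
      / (qpoch (inverse x) q (k + 1) * qpoch x q (k + 1)))"

definition Aser :: "int \<Rightarrow> complex \<Rightarrow> complex \<Rightarrow> complex" where
  "Aser m x q = (\<Sum>k. (-1) ^ k * q powi (int k * (int k + 1) div 2 + int k * m)
      * x powi (int k + m) / (qpoch q q k * qpoch (x ^ 2 * q) q k))"

definition Bser :: "int \<Rightarrow> complex \<Rightarrow> complex \<Rightarrow> complex" where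
  "Bser m x q = Aser m (inverse x) q"

definition LA :: "int \<Rightarrow> complex \<Rightarrow> complex \<Rightarrow> complex" where
  "LA m x q = Aser (m + 1) x q * Cser m x q - Aser m x q * Cser (m + 1) x q"

definition LB :: "int \<Rightarrow> complex \<Rightarrow> complex \<Rightarrow> complex" where
  "LB m x q = Bser (m + 1) x q * Cser m x q - Bser m x q * Cser (m + 1) x q"

end

theory Submission
  imports Defs
begin

text \<open>Writing \<open>A\<^sub>m(x) = x\<^sup>m F(x\<^sup>2; q\<^sup>m x)\<close> with the entire series
  \<open>F(a; z) = \<Sum>\<^sub>k (-1)\<^sup>k q\<^bsup>k(k+1)/2\<^esup> z\<^sup>k / ((q;q)\<^sub>k (aq;q)\<^sub>k)\<close>, the
  \<open>q\<close>-difference equation of \<open>F\<close> gives \<open>A\<^sub>m + A\<^sub>m\<^sub>+\<^sub>2 = (x + x\<^sup>-\<^sup>1 - q\<^bsup>m+1\<^esup>) A\<^sub>m\<^sub>+\<^sub>1\<close>,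
  a recurrence that is invariant under \<open>x \<mapsto> x\<^sup>-\<^sup>1\<close> and so is also satisfied by \<open>B\<^sub>m\<close>.
  Hence the Casoratian \<open>A\<^sub>m B\<^sub>m\<^sub>+\<^sub>1 - A\<^sub>m\<^sub>+\<^sub>1 B\<^sub>m\<close> does not depend on \<open>m\<close>; letting
  \<open>q\<^sup>m \<rightarrow> 0\<close> (with \<open>m \<rightarrow> \<infinity>\<close> or \<open>m \<rightarrow> -\<infinity>\<close>) and using \<open>F(a; 0) = 1\<close> shows that it
  equals \<open>x\<^sup>-\<^sup>1 - x\<close>. Both identities are then linear algebra in \<open>C\<^sub>m, C\<^sub>m\<^sub>+\<^sub>1\<close>.\<close>

lemma summable_norm_if_ratio_tendsto_0:
  fixes t :: "nat \<Rightarrow> 'a :: real_normed_div_algebra"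
  assumes rec: "\<And>k. t (Suc k) = r k * t k" and lim: "r \<longlonglongrightarrow> 0"
  shows "summable (\<lambda>k. norm (t k))"
proof -
  have "(\<lambda>k. norm (r k)) \<longlonglongrightarrow> 0" using lim by (simp add: tendsto_norm_zero)
  then have "eventually (\<lambda>k. norm (r k) < 1/2) sequentially"
    by (rule order_tendstoD(2)) simp
  then obtain N where N: "\<And>k. k \<ge> N \<Longrightarrow> norm (r k) < 1/2"
    by (auto simp: eventually_sequentially)
  show ?thesis
  proof (rule summable_ratio_test[where c="1/2" and N=N])
    fix n assume "n \<ge> N"
    then have "norm (r n) * norm (t n) \<le> 1/2 * norm (t n)"
      using N[of n] by (intro mult_right_mono) auto
    then show "norm (norm (t (Suc n))) \<le> 1/2 * norm (norm (t n))"
      by (simp add: rec norm_mult)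
  qed simp
qed

lemma power_neq_1_if_norm_neq_1:
  fixes q :: "'a :: real_normed_div_algebra"
  assumes "norm q \<noteq> 1" and "n > 0"
  shows "q ^ n \<noteq> 1"
proof
  assume "q ^ n = 1"
  then have "norm q ^ n = 1" by (metis norm_one norm_power)
  with assms show False
    by (metis norm_ge_zero power_eq_imp_eq_base power_one zero_le_one)
qed

lemma exists_powi_tendsto_0:
  fixes q :: "'a :: real_normed_field"
  assumes "norm q \<noteq> 1" and "q \<noteq> 0"
  obtains g :: "nat \<Rightarrow> int" where "(\<lambda>n. q powi g n) \<longlonglongrightarrow> 0"
proof (cases "norm q < 1")
  case True
  then have "(\<lambda>n. q powi int n) \<longlonglongrightarrow> 0" by (simp add: LIMSEQ_power_zero)
  then show ?thesis by (rule that)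
next
  case False
  then have "norm (inverse q) < 1"
    using assms by (simp add: norm_inverse inverse_less_1_iff)
  then have "(\<lambda>n. q powi (- int n)) \<longlonglongrightarrow> 0"
    using LIMSEQ_power_zero[of "inverse q"] by (simp add: power_int_minus power_inverse)
  then show ?thesis by (rule that)
qed

lemma qpoch_Suc: "qpoch a q (Suc k) = qpoch a q k * (1 - a * q ^ k)"
  by (simp add: qpoch_def)

lemma qpoch_nonzero: "(\<And>j. j < k \<Longrightarrow> a * q ^ j \<noteq> 1) \<Longrightarrow> qpoch a q k \<noteq> 0"
  by (auto simp: qpoch_def)

lemma triangular_Suc: "Suc k * (Suc k + 1) div 2 = k * (k + 1) div 2 + Suc k"
proof -
  have "Suc k * (Suc k + 1) = k * (k + 1) + 2 * Suc k" by (simp add: algebra_simps)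
  then show ?thesis by simp
qed

lemma casoratian_shift_invariant:
  fixes u v :: "int \<Rightarrow> 'a :: comm_ring"
  assumes u: "\<And>i. u i + u (i + 2) = c i * u (i + 1)"
    and v: "\<And>i. v i + v (i + 2) = c i * v (i + 1)"
  shows "u i * v (i + 1) - u (i + 1) * v i = u 0 * v 1 - u 1 * v 0"
proof -
  define W where "W i = u i * v (i + 1) - u (i + 1) * v i" for i
  have step: "W (i + 1) = W i" for i
  proof -
    have "i + 1 + 1 = i + 2" by simp
    moreover have "u (i + 2) = c i * u (i + 1) - u i" "v (i + 2) = c i * v (i + 1) - v i"
      using u[of i] v[of i] by (metis add_diff_cancel_left')+
    ultimately show ?thesis
      unfolding W_def by (simp only:) (simp add: algebra_simps)
  qed
  have "W i = W 0"
  proof (induction i rule: int_induct[where k=0])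
    case (step1 i) then show ?case using step[of i] by simp
  next
    case (step2 i) then show ?case using step[of "i - 1"] by simp
  qed simp
  then show ?thesis by (simp add: W_def)
qed

definition qphi_coeff :: "complex \<Rightarrow> complex \<Rightarrow> nat \<Rightarrow> complex" where
  "qphi_coeff a q k = (-1) ^ k * q ^ (k * (k + 1) div 2) / (qpoch q q k * qpoch (a * q) q k)"

definition qphi :: "complex \<Rightarrow> complex \<Rightarrow> complex \<Rightarrow> complex" where
  "qphi a q z = (\<Sum>k. qphi_coeff a q k * z ^ k)"

locale qphi_params =
  fixes a q :: complex
  assumes q_nonzero: "q \<noteq> 0" and a_nonzero: "a \<noteq> 0" and norm_q_neq_1: "norm q \<noteq> 1"
    and aq_power_neq_1: "\<And>k. a * q ^ Suc k \<noteq> 1"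
begin

lemma q_power_Suc_neq_1: "q ^ Suc k \<noteq> 1"
  using norm_q_neq_1 by (rule power_neq_1_if_norm_neq_1) simp

lemma qpoch_q_nonzero: "qpoch q q k \<noteq> 0"
  using q_power_Suc_neq_1 by (auto intro!: qpoch_nonzero)

lemma qpoch_aq_nonzero: "qpoch (a * q) q k \<noteq> 0"
  using aq_power_neq_1 by (auto intro!: qpoch_nonzero simp: mult.assoc)

lemma qphi_coeff_Suc:
  "qphi_coeff a q (Suc k)
     = -(q ^ Suc k) / ((1 - q ^ Suc k) * (1 - a * q ^ Suc k)) * qphi_coeff a q k"
proof -
  have "1 - q * q ^ k \<noteq> 0" "1 - a * q * q ^ k \<noteq> 0"
    using q_power_Suc_neq_1[of k] aq_power_neq_1[of k] by (auto simp: mult.assoc)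
  then show ?thesis
    unfolding qphi_coeff_def qpoch_Suc triangular_Suc power_add
    using qpoch_q_nonzero[of k] qpoch_aq_nonzero[of k] by (simp add: divide_simps mult.assoc)
qed

lemma qphi_ratio_tendsto_0:
  "(\<lambda>k. -(q ^ Suc k) * z / ((1 - q ^ Suc k) * (1 - a * q ^ Suc k))) \<longlonglongrightarrow> 0"
proof (cases "norm q < 1")
  case True
  have "(\<lambda>k. q ^ Suc k) \<longlonglongrightarrow> 0"
    using LIMSEQ_power_zero[OF True] by (rule LIMSEQ_Suc)
  then have "(\<lambda>k. -(q ^ Suc k) * z / ((1 - q ^ Suc k) * (1 - a * q ^ Suc k)))
        \<longlonglongrightarrow> - 0 * z / ((1 - 0) * (1 - a * 0))"
    by (intro tendsto_intros) auto
  then show ?thesis by simp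
next
  case False
  then have "norm (inverse q) < 1"
    using norm_q_neq_1 q_nonzero by (simp add: norm_inverse inverse_less_1_iff)
  then have "(\<lambda>k. inverse q ^ Suc k) \<longlonglongrightarrow> 0"
    by (intro LIMSEQ_Suc LIMSEQ_power_zero)
  then have "(\<lambda>k. - z * inverse q ^ Suc k / ((inverse q ^ Suc k - 1) * (inverse q ^ Suc k - a)))
        \<longlonglongrightarrow> - z * 0 / ((0 - 1) * (0 - a))"
    using a_nonzero by (intro tendsto_intros) auto
  moreover have "-(q ^ Suc k) * z / ((1 - q ^ Suc k) * (1 - a * q ^ Suc k))
     = - z * inverse q ^ Suc k / ((inverse q ^ Suc k - 1) * (inverse q ^ Suc k - a))" for k
    using q_nonzero q_power_Suc_neq_1[of k] aq_power_neq_1[of k]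
    by (simp add: divide_simps)
  ultimately show ?thesis by simp
qed

lemma summable_qphi: "summable (\<lambda>k. qphi_coeff a q k * z ^ k)"
proof (rule summable_norm_cancel, rule summable_norm_if_ratio_tendsto_0)
  show "qphi_coeff a q (Suc k) * z ^ Suc k =
    -(q ^ Suc k) * z / ((1 - q ^ Suc k) * (1 - a * q ^ Suc k)) * (qphi_coeff a q k * z ^ k)" for k
    by (simp add: qphi_coeff_Suc)
qed (rule qphi_ratio_tendsto_0)

lemma qphi_sums: "(\<lambda>k. qphi_coeff a q k * z ^ k) sums qphi a q z"
  unfolding qphi_def by (rule summable_sums[OF summable_qphi])

text \<open>Multiplying the \<open>k\<close>-th term by \<open>(1 - q\<^sup>k)(1 - a q\<^sup>k)\<close> shifts the series by one index.\<close>
lemma qphi_functional_eq: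
  "qphi a q z + a * qphi a q (q\<^sup>2 * z) = (1 + a - q * z) * qphi a q (q * z)"
proof -
  define s where "s k = qphi_coeff a q k * z ^ k * ((1 - q ^ k) * (1 - a * q ^ k))" for k
  have s_Suc: "s (Suc k) = - (q * z) * (qphi_coeff a q k * (q * z) ^ k)" for k
    using q_power_Suc_neq_1[of k] aq_power_neq_1[of k]
    by (simp add: s_def qphi_coeff_Suc power_mult_distrib)
  have "(\<lambda>k. s (Suc k)) sums (- (q * z) * qphi a q (q * z))"
    unfolding s_Suc by (intro sums_mult qphi_sums)
  moreover have "s 0 = 0" by (simp add: s_def)
  ultimately have shifted: "s sums (- (q * z) * qphi a q (q * z))"
    using sums_Suc_iff[of s] by simp
  have "(\<lambda>k. qphi_coeff a q k * z ^ k - (1 + a) * (qphi_coeff a q k * (q * z) ^ k)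
              + a * (qphi_coeff a q k * (q\<^sup>2 * z) ^ k))
     sums (qphi a q z - (1 + a) * qphi a q (q * z) + a * qphi a q (q\<^sup>2 * z))"
    by (intro sums_add sums_diff sums_mult qphi_sums)
  moreover have "(\<lambda>k. qphi_coeff a q k * z ^ k - (1 + a) * (qphi_coeff a q k * (q * z) ^ k)
              + a * (qphi_coeff a q k * (q\<^sup>2 * z) ^ k)) = s"
    by (simp add: fun_eq_iff s_def power_mult[symmetric] mult_2_right
        power_add algebra_simps)
  ultimately have expanded: "s sums (qphi a q z - (1 + a) * qphi a q (q * z) + a * qphi a q (q\<^sup>2 * z))"
    by simp
  from sums_unique2[OF shifted expanded] show ?thesis by (simp add: algebra_simps)
qed

lemma qphi_tendsto_1:
  assumes "u \<longlonglongrightarrow> 0"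
  shows "(\<lambda>n. qphi a q (u n)) \<longlonglongrightarrow> 1"
proof -
  have "isCont (qphi a q) 0"
    unfolding qphi_def[abs_def] by (rule isCont_powser[where K=1]) (use summable_qphi[of 1] in auto)
  moreover have "qphi a q 0 = 1"
    unfolding qphi_def powser_zero by (simp add: qphi_coeff_def qpoch_def)
  ultimately show ?thesis
    using isCont_tendsto_compose[OF _ assms] by fastforce
qed

end

lemma qphi_params_of_square:
  fixes q y :: complex
  assumes "norm q \<noteq> 1" and "q \<noteq> 0" and "y \<noteq> 0"
    and "\<And>n::int. n < 0 \<Longrightarrow> y\<^sup>2 \<noteq> q powi n"
  shows "qphi_params (y\<^sup>2) q"
proof
  fix k
  show "y\<^sup>2 * q ^ Suc k \<noteq> 1"
  proof
    assume "y\<^sup>2 * q ^ Suc k = 1"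
    then have "y\<^sup>2 = inverse (q ^ Suc k)"
      using assms(2) by (simp add: field_simps)
    then have "y\<^sup>2 = q powi (- int (Suc k))"
      by (simp only: power_int_minus power_int_of_nat)
    with assms(4)[of "- int (Suc k)"] show False by simp
  qed
qed (use assms in auto)

lemma Aser_eq_qphi:
  assumes "y \<noteq> 0" and "qphi_params (y\<^sup>2) q"
  shows "Aser m y q = y powi m * qphi (y\<^sup>2) q (q powi m * y)"
proof -
  interpret qphi_params "y\<^sup>2" q by fact
  have "(-1) ^ k * q powi (int k * (int k + 1) div 2 + int k * m) * y powi (int k + m)
      / (qpoch q q k * qpoch (y\<^sup>2 * q) q k) = y powi m * (qphi_coeff (y\<^sup>2) q k * (q powi m * y) ^ k)"
    for k
  proof -
    have "int k * (int k + 1) div 2 = int (k * (k + 1) div 2)"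
      by (simp only: zdiv_int of_nat_mult of_nat_add of_nat_1 of_nat_numeral)
    then have "q powi (int k * (int k + 1) div 2 + int k * m) = q ^ (k * (k + 1) div 2) * (q powi m) ^ k"
      using q_nonzero by (simp add: power_int_add power_int_mult mult.commute[of "int k"])
    moreover have "y powi (int k + m) = y ^ k * y powi m"
      using assms(1) by (simp add: power_int_add)
    ultimately show ?thesis by (simp add: qphi_coeff_def power_mult_distrib)
  qed
  then show ?thesis
    unfolding Aser_def qphi_def by (subst suminf_mult[symmetric, OF summable_qphi]) simp
qed

lemma Aser_three_term:
  assumes y: "y \<noteq> 0" and params: "qphi_params (y\<^sup>2) q"
  shows "Aser m y q + Aser (m + 2) y q = (y + inverse y - q powi (m + 1)) * Aser (m + 1) y q"
proof -
  interpret qphi_params "y\<^sup>2" q by fact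
  define z where "z = q powi m * y"
  have p1: "q powi (m + 1) = q powi m * q" "y powi (m + 1) = y powi m * y"
    using q_nonzero y by (simp_all add: power_int_add_1)
  have p2: "q powi (m + 2) = q powi m * q\<^sup>2" "y powi (m + 2) = y powi m * y\<^sup>2"
    using q_nonzero y by (simp_all add: power_int_add)
  have "Aser m y q + Aser (m + 2) y q
      = y powi m * (qphi (y\<^sup>2) q z + y\<^sup>2 * qphi (y\<^sup>2) q (q\<^sup>2 * z))"
    unfolding Aser_eq_qphi[OF y params] p2 z_def by (simp add: algebra_simps)
  also have "\<dots> = y powi m * ((1 + y\<^sup>2 - q * z) * qphi (y\<^sup>2) q (q * z))"
    by (simp only: qphi_functional_eq)
  also have "\<dots> = (y + inverse y - q powi (m + 1)) * Aser (m + 1) y q"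
    unfolding Aser_eq_qphi[OF y params] p1 z_def using y
    by (simp add: field_simps power2_eq_square)
  finally show ?thesis .
qed

lemma Aser_Bser_casoratian:
  fixes q x :: complex
  assumes "norm q \<noteq> 1" and "q \<noteq> 0" and "x \<noteq> 0"
    and x2: "\<And>n::int. n \<noteq> 0 \<Longrightarrow> x\<^sup>2 \<noteq> q powi n"
  shows "Aser m x q * Bser (m + 1) x q - Aser (m + 1) x q * Bser m x q = inverse x - x"
proof -
  have px: "qphi_params (x\<^sup>2) q"
    using assms by (intro qphi_params_of_square) auto
  have pix: "qphi_params ((inverse x)\<^sup>2) q"
  proof (intro qphi_params_of_square)
    fix n :: int assume "n < 0"
    then show "(inverse x)\<^sup>2 \<noteq> q powi n"
      using x2[of "- n"] by (metis inverse_inverse_eq power_inverse power_int_minus neg_0_equal_iff_equal less_irrefl)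
  qed (use assms in auto)
  define W where "W i = Aser i x q * Bser (i + 1) x q - Aser (i + 1) x q * Bser i x q" for i
  define c where "c i = x + inverse x - q powi (i + 1)" for i
  have "Aser i x q + Aser (i + 2) x q = c i * Aser (i + 1) x q" for i
    unfolding c_def using assms(3) px by (rule Aser_three_term)
  moreover have "Aser i (inverse x) q + Aser (i + 2) (inverse x) q = c i * Aser (i + 1) (inverse x) q"
    for i
    unfolding c_def using Aser_three_term[of "inverse x", OF _ pix] assms(3) by (simp add: add.commute)
  ultimately have W_const: "W i = W 0" for i
    using casoratian_shift_invariant[of "\<lambda>i. Aser i x q" c "\<lambda>i. Aser i (inverse x) q" i]
    unfolding W_def Bser_def by simp
  define Fa where "Fa = qphi (x\<^sup>2) q"
  define Fb where "Fb = qphi ((inverse x)\<^sup>2) q"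
  have W_qphi: "W i = inverse x * Fa (q powi i * x) * Fb (q * q powi i * inverse x)
                  - x * Fa (q * q powi i * x) * Fb (q powi i * inverse x)" for i
  proof -
    have "q powi (i + 1) = q * q powi i" "x powi (i + 1) = x powi i * x"
      "x powi (1 + i) = x * x powi i"
      using assms(2,3) by (simp_all add: power_int_add)
    moreover have ix: "inverse x \<noteq> 0" using assms(3) by simp
    ultimately show ?thesis
      unfolding W_def Bser_def Aser_eq_qphi[OF assms(3) px] Aser_eq_qphi[OF ix pix] Fa_def Fb_def
      using assms(3) by (simp add: field_simps)
  qed
  obtain g where g: "(\<lambda>n. q powi g n) \<longlonglongrightarrow> 0"
    using exists_powi_tendsto_0 assms(1,2) by blast
  have "(\<lambda>n. inverse x * Fa (q powi g n * x) * Fb (q * q powi g n * inverse x)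
                  - x * Fa (q * q powi g n * x) * Fb (q powi g n * inverse x))
        \<longlonglongrightarrow> inverse x * 1 * 1 - x * 1 * 1"
    unfolding Fa_def Fb_def
    by (intro tendsto_intros qphi_params.qphi_tendsto_1[OF px] qphi_params.qphi_tendsto_1[OF pix]
        tendsto_mult_left_zero tendsto_mult_right_zero g)
  then have "(\<lambda>n. W 0) \<longlonglongrightarrow> inverse x - x"
    by (simp add: W_qphi[symmetric] W_const[of "g _"])
  then have "W 0 = inverse x - x" by (simp add: LIMSEQ_const_iff)
  then show ?thesis using W_const[of m] by (simp add: W_def)
qed

theorem corollary3p3:
  fixes q x :: complex and m :: int
  assumes "norm q \<noteq> 1" and "q \<noteq> 0" and "x \<noteq> 0"
    and "\<forall>n::int. x \<noteq> q powi n \<and> inverse x \<noteq> q powi n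
                 \<and> x ^ 2 \<noteq> q powi n \<and> inverse (x ^ 2) \<noteq> q powi n"
  shows "Cser m x q = (Aser m x q * LB m x q - Bser m x q * LA m x q) / (inverse x - x)
    \<and> Cser (m + 1) x q
           = (Aser (m + 1) x q * LB m x q - Bser (m + 1) x q * LA m x q) / (inverse x - x)"
proof -
  have casoratian: "Aser m x q * Bser (m + 1) x q - Aser (m + 1) x q * Bser m x q = inverse x - x"
    using assms by (intro Aser_Bser_casoratian) auto
  have "inverse x - x \<noteq> 0"
  proof
    assume "inverse x - x = 0"
    then have "x ^ 2 = q powi 0" using assms(3) by (simp add: field_simps power2_eq_square)
    with assms(4) show False by blast
  qed
  moreover have "Aser k x q * LB m x q - Bser k x q * LA m x q
      = Cser k x q * (Aser m x q * Bser (m + 1) x q - Aser (m + 1) x q * Bser m x q)"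
    if "k = m \<or> k = m + 1" for k
    using that unfolding LA_def LB_def by (auto simp: algebra_simps)
  ultimately show ?thesis
    unfolding casoratian by simp
qed

end
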